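(* Let $n\ge 1$ and let $\sigma,\tau\in S_n$. For every $i\in[n]$ the following hold: (i) $\sigma(i)\le i+c_i(\sigma)$; (ii) $c_i(\sigma\tau)\le c_i(\tau)+c_{\tau(i)}(\sigma)$; (iii) the map $\sigma^{-1}$ restricts to a bijection from $A(\sigma^{-1})_{\sigma(i)}$ onto $A(\sigma)_i$; in particular $i+c_i(\sigma)=\sigma(i)+c_{\sigma(i)}(\sigma^{-1})$.
   Context: $[n]=\{1,\dots,n\}$ and $S_n$ is the group of permutations of $[n]$. Composition is $(\sigma\tau)(i)=\sigma(\tau(i))$. For $\sigma\in S_n$ and $i\in[n]$ let $C(\sigma)_i=\{j\in[n]: j>i \text{ and } \sigma(j)<\sigma(i)\}$, $c_i(\sigma)=|C(\sigma)_i|$ (so $[c_1(\sigma),\dots,c_n(\sigma)]$ is the Lehmer code of $\sigma$), and $A(\sigma)_i=[i]\cup C(\sigma)_i$. *)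

theory Defs
  imports "HOL-Combinatorics.Permutations"
begin

text \<open>Permutations of [n] = {1..n} are functions nat => nat that permute {1..n}
  (identity outside). Composition is function composition.\<close>

definition lehmer_C :: "nat \<Rightarrow> (nat \<Rightarrow> nat) \<Rightarrow> nat \<Rightarrow> nat set" where
  "lehmer_C n \<sigma> i = {j \<in> {1..n}. j > i \<and> \<sigma> j < \<sigma> i}"

definition lehmer_c :: "nat \<Rightarrow> (nat \<Rightarrow> nat) \<Rightarrow> nat \<Rightarrow> nat" where
  "lehmer_c n \<sigma> i = card (lehmer_C n \<sigma> i)"

definition lehmer_A :: "nat \<Rightarrow> (nat \<Rightarrow> nat) \<Rightarrow> nat \<Rightarrow> nat set" where
  "lehmer_A n \<sigma> i = {1..i} \<union> lehmer_C n \<sigma> i"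

end

theory Submission
  imports Defs
begin

text \<open>For \<open>i \<in> [n]\<close>, the set \<open>A(\<sigma>)\<^sub>i\<close> consists of the \<open>k \<in> [n]\<close> with \<open>k \<le> i\<close> or \<open>\<sigma> k < \<sigma> i\<close>, a
  description that is symmetric in the roles of positions and values, so \<open>\<sigma>\<close> maps \<open>A(\<sigma>)\<^sub>i\<close>
  onto \<open>A(\<sigma>\<^sup>-\<^sup>1)\<^bsub>\<sigma>(i)\<^esub>\<close>. Comparing cardinalities gives \<open>i + c\<^sub>i(\<sigma>) = \<sigma>(i) + c\<^bsub>\<sigma>(i)\<^esub>(\<sigma>\<^sup>-\<^sup>1)\<close>,
  and (i) follows. For (ii), an inversion \<open>j\<close> of \<open>\<sigma>\<tau>\<close> at \<open>i\<close> is either an inversion of \<open>\<tau>\<close> at \<open>i\<close>,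
  or \<open>\<tau>(j)\<close> is an inversion of \<open>\<sigma>\<close> at \<open>\<tau>(i)\<close>.\<close>

lemma finite_lehmer_C: "finite (lehmer_C n \<sigma> i)"
  unfolding lehmer_C_def by simp

lemma card_lehmer_A: "card (lehmer_A n \<sigma> i) = i + lehmer_c n \<sigma> i"
proof -
  have "{1..i} \<inter> lehmer_C n \<sigma> i = {}"
    unfolding lehmer_C_def by auto
  then show ?thesis
    unfolding lehmer_A_def lehmer_c_def by (simp add: card_Un_disjoint finite_lehmer_C)
qed

lemma lehmer_A_eq:
  assumes "i \<in> {1..n}"
  shows "lehmer_A n \<sigma> i = {k \<in> {1..n}. k \<le> i \<or> \<sigma> k < \<sigma> i}"
  using assms unfolding lehmer_A_def lehmer_C_def by auto

lemma bij_betw_lehmer_A_inv: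
  assumes perm: "\<sigma> permutes {1..n}" and i: "i \<in> {1..n}"
  shows "bij_betw \<sigma> (lehmer_A n \<sigma> i) (lehmer_A n (inv \<sigma>) (\<sigma> i))"
proof -
  have inj: "inj \<sigma>"
    using perm by (rule permutes_inj)
  have si: "\<sigma> i \<in> {1..n}"
    using i by (rule permutes_in_image[OF perm, THEN iffD2])
  have "\<sigma> ` lehmer_A n \<sigma> i = lehmer_A n (inv \<sigma>) (\<sigma> i)"
  proof (rule set_eqI)
    fix j
    obtain k where j: "j = \<sigma> k"
      using perm by (metis permutes_inverses(1))
    have "j \<in> \<sigma> ` lehmer_A n \<sigma> i \<longleftrightarrow> k \<in> {1..n} \<and> (k \<le> i \<or> \<sigma> k < \<sigma> i)"
      by (simp only: j inj_image_mem_iff[OF inj] lehmer_A_eq[OF i] mem_Collect_eq)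
    also have "\<dots> \<longleftrightarrow> \<sigma> k \<in> {1..n} \<and> (\<sigma> k \<le> \<sigma> i \<or> k < i)"
    proof -
      have "k = i \<longleftrightarrow> \<sigma> k = \<sigma> i"
        using inj by (auto dest: injD)
      then have "k \<le> i \<or> \<sigma> k < \<sigma> i \<longleftrightarrow> \<sigma> k \<le> \<sigma> i \<or> k < i"
        by auto
      then show ?thesis
        using permutes_in_image[OF perm, of k] by blast
    qed
    also have "\<dots> \<longleftrightarrow> \<sigma> k \<in> {1..n} \<and> (\<sigma> k \<le> \<sigma> i \<or> inv \<sigma> (\<sigma> k) < inv \<sigma> (\<sigma> i))"
      by (simp only: permutes_inverses(2)[OF perm])
    also have "\<dots> \<longleftrightarrow> j \<in> lehmer_A n (inv \<sigma>) (\<sigma> i)"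
      by (simp only: j lehmer_A_eq[OF si] mem_Collect_eq)
    finally show "j \<in> \<sigma> ` lehmer_A n \<sigma> i \<longleftrightarrow> j \<in> lehmer_A n (inv \<sigma>) (\<sigma> i)" .
  qed
  then show ?thesis
    by (simp add: bij_betw_def inj_on_subset[OF inj subset_UNIV])
qed

lemma lehmer_c_comp_le:
  assumes perm: "\<tau> permutes {1..n}"
  shows "lehmer_c n (\<sigma> \<circ> \<tau>) i \<le> lehmer_c n \<tau> i + lehmer_c n \<sigma> (\<tau> i)"
proof -
  let ?B = "{j \<in> {1..n}. \<tau> j \<in> lehmer_C n \<sigma> (\<tau> i)}"
  have inj: "inj \<tau>"
    using perm by (rule permutes_inj)
  have "lehmer_C n (\<sigma> \<circ> \<tau>) i \<subseteq> lehmer_C n \<tau> i \<union> ?B"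
  proof
    fix j
    assume j: "j \<in> lehmer_C n (\<sigma> \<circ> \<tau>) i"
    then have "\<tau> j \<noteq> \<tau> i"
      using inj unfolding lehmer_C_def by (auto dest: injD)
    moreover have "\<tau> j \<in> {1..n}"
      using j permutes_in_image[OF perm] unfolding lehmer_C_def by blast
    ultimately show "j \<in> lehmer_C n \<tau> i \<union> ?B"
      using j unfolding lehmer_C_def by auto
  qed
  then have "card (lehmer_C n (\<sigma> \<circ> \<tau>) i) \<le> card (lehmer_C n \<tau> i \<union> ?B)"
    by (rule card_mono[rotated]) (simp add: finite_lehmer_C)
  also have "\<dots> \<le> card (lehmer_C n \<tau> i) + card ?B"
    by (rule card_Un_le)
  moreover have "card ?B \<le> card (lehmer_C n \<sigma> (\<tau> i))"
    by (rule card_inj_on_le[of \<tau>])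
      (auto simp only: finite_lehmer_C inj_on_subset[OF inj subset_UNIV] mem_Collect_eq)
  ultimately show ?thesis
    unfolding lehmer_c_def by linarith
qed

theorem lemma3p1:
  fixes n i :: nat and \<sigma> \<tau> :: "nat \<Rightarrow> nat"
  assumes "n \<ge> 1" and "\<sigma> permutes {1..n}" and "\<tau> permutes {1..n}" and "i \<in> {1..n}"
  shows "\<sigma> i \<le> i + lehmer_c n \<sigma> i
    \<and> lehmer_c n (\<sigma> \<circ> \<tau>) i \<le> lehmer_c n \<tau> i + lehmer_c n \<sigma> (\<tau> i)
    \<and> bij_betw (inv \<sigma>) (lehmer_A n (inv \<sigma>) (\<sigma> i)) (lehmer_A n \<sigma> i)
    \<and> i + lehmer_c n \<sigma> i = \<sigma> i + lehmer_c n (inv \<sigma>) (\<sigma> i)"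
proof -
  have "inv \<sigma> permutes {1..n}" and "\<sigma> i \<in> {1..n}"
    using assms(2,4) permutes_in_image[OF assms(2)] by (simp_all add: permutes_inv)
  then have bij: "bij_betw (inv \<sigma>) (lehmer_A n (inv \<sigma>) (\<sigma> i)) (lehmer_A n \<sigma> i)"
    using bij_betw_lehmer_A_inv[of "inv \<sigma>" n "\<sigma> i"] assms(2)
    by (simp add: inv_inv_eq permutes_bij permutes_inverses(2))
  then have "i + lehmer_c n \<sigma> i = \<sigma> i + lehmer_c n (inv \<sigma>) (\<sigma> i)"
    by (metis bij_betw_same_card card_lehmer_A)
  with bij lehmer_c_comp_le[OF assms(3), of \<sigma> i] show ?thesis
    by linarith
qed

end
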